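(* Let $F$ be a graph of diameter $2$, $n=|V(F)|$, $t=\delta(F)$, and let $l>n$ be an integer. If $C_{l-2}^{n-2}>n!\,C_{l-2}^{n-t-2}$, then $0<\delta_l<z_{i+1}-z_i$ for every $i\in\{t+1,t+2,\dots,l-1\}$.
   Context: All graphs are simple, finite, undirected. The $F$-degree of a vertex $v$ in $G$ is the number of subgraphs of $G$ (not necessarily induced) isomorphic to $F$ and containing $v$. $A_{2l-1}$ is the graph with vertex set $\{1,\dots,2l-1\}$ in which distinct $i,j$ are adjacent iff $|i-j|\le l-1$; $F_{2l}$ is obtained from $A_{2l-1}$ by adding a new vertex $2l$ joined exactly to $1,\dots,t$. $z_i$ is the $F$-degree of $i$ in $A_{2l-1}$, $f_i$ the $F$-degree of $i$ in $F_{2l}$, and $\delta_i=f_i-z_i$. $C_m^k=\frac{m!}{k!(m-k)!}$ for integers $m\ge k\ge 0$, and $C_m^k=0$ otherwise. *)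

theory Defs
  imports Main
begin

type_synonym 'a sgraph = "'a set \<times> 'a set set"

definition verts :: "'a sgraph \<Rightarrow> 'a set" where "verts G = fst G"
definition edges :: "'a sgraph \<Rightarrow> 'a set set" where "edges G = snd G"

definition simple_graph :: "'a sgraph \<Rightarrow> bool" where
  "simple_graph G \<longleftrightarrow> finite (verts G) \<and>
     (\<forall>e\<in>edges G. e \<subseteq> verts G \<and> card e = 2)"

definition gdegree :: "'a sgraph \<Rightarrow> 'a \<Rightarrow> nat" where
  "gdegree G v = card {u \<in> verts G. {v, u} \<in> edges G}"

definition min_degree :: "'a sgraph \<Rightarrow> nat" where
  "min_degree G = Min (gdegree G ` verts G)"

definition is_walk :: "'a sgraph \<Rightarrow> 'a list \<Rightarrow> bool" where
  "is_walk G xs \<longleftrightarrow> xs \<noteq> [] \<and> set xs \<subseteq> verts G \<and>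
     (\<forall>i. Suc i < length xs \<longrightarrow> {xs ! i, xs ! Suc i} \<in> edges G)"

definition walk_of_len :: "'a sgraph \<Rightarrow> 'a \<Rightarrow> 'a \<Rightarrow> nat \<Rightarrow> bool" where
  "walk_of_len G u v k \<longleftrightarrow> (\<exists>xs. is_walk G xs \<and> hd xs = u \<and> last xs = v \<and> length xs = Suc k)"

definition gdist :: "'a sgraph \<Rightarrow> 'a \<Rightarrow> 'a \<Rightarrow> nat" where
  "gdist G u v = (LEAST k. walk_of_len G u v k)"

definition connected_graph :: "'a sgraph \<Rightarrow> bool" where
  "connected_graph G \<longleftrightarrow> verts G \<noteq> {} \<and>
     (\<forall>u\<in>verts G. \<forall>v\<in>verts G. \<exists>k. walk_of_len G u v k)"

definition diameter :: "'a sgraph \<Rightarrow> nat" where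
  "diameter G = Max {gdist G u v | u v. u \<in> verts G \<and> v \<in> verts G}"

definition isomorphic :: "'a sgraph \<Rightarrow> 'b sgraph \<Rightarrow> bool" where
  "isomorphic F H \<longleftrightarrow> (\<exists>f. bij_betw f (verts F) (verts H) \<and>
     (\<forall>x\<in>verts F. \<forall>y\<in>verts F. {x, y} \<in> edges F \<longleftrightarrow> {f x, f y} \<in> edges H))"

definition subgraph_of :: "'b sgraph \<Rightarrow> 'b sgraph \<Rightarrow> bool" where
  "subgraph_of H G \<longleftrightarrow> verts H \<subseteq> verts G \<and> edges H \<subseteq> edges G \<and>
     (\<forall>e\<in>edges H. e \<subseteq> verts H)"

definition Fdeg :: "'a sgraph \<Rightarrow> 'b sgraph \<Rightarrow> 'b \<Rightarrow> nat" where
  "Fdeg F G v = card {H. subgraph_of H G \<and> isomorphic F H \<and> v \<in> verts H}"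

text \<open>A_{2l-1}: vertices 1..2l-1, i~j iff |i-j| <= l-1\<close>
definition A_graph :: "nat \<Rightarrow> nat sgraph" where
  "A_graph l = ({1..2*l-1},
     {{i, j} | i j. i \<in> {1..2*l-1} \<and> j \<in> {1..2*l-1} \<and> i \<noteq> j \<and>
        i - j \<le> l - 1 \<and> j - i \<le> l - 1})"

definition F_graph :: "nat \<Rightarrow> nat \<Rightarrow> nat sgraph" where
  "F_graph l t = (insert (2*l) (verts (A_graph l)),
     edges (A_graph l) \<union> {{2*l, j} | j. j \<in> {1..t}})"

definition Cb :: "int \<Rightarrow> int \<Rightarrow> nat" where
  "Cb m k = (if 0 \<le> k \<and> k \<le> m then nat m choose nat k else 0)"

end

theory Submission
  imports Defs "HOL-Combinatorics.Permutations"
begin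

text \<open>Copies of \<open>F\<close> in \<open>F_{2l}\<close> that avoid the apex \<open>2l\<close> are exactly the copies in
  \<open>A_{2l-1}\<close>, so \<open>\<delta>_l\<close> counts the copies through both \<open>l\<close> and \<open>2l\<close>. The apex has only the
  neighbours \<open>1, ..., t\<close>, while the vertex of \<open>F\<close> placed there has degree at least \<open>t = \<delta>(F)\<close>;
  hence its neighbours occupy all of \<open>{1..t}\<close>, and since \<open>F\<close> has diameter two every other
  vertex lies within \<open>l - 1\<close> of \<open>{1..t}\<close>. Such a copy thus consists of \<open>{1..t} \<union> {l, 2l}\<close>
  together with \<open>n - t - 2\<close> of the \<open>l - 2\<close> free positions in \<open>{t+1..t+l-1}\<close>, which gives
  \<open>\<delta>_l \<le> n! C(l-2, n-t-2)\<close>; placing a vertex of minimum degree at the apex gives \<open>\<delta>_l > 0\<close>.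

  On the other hand, the transposition of \<open>i\<close> and \<open>i + 1\<close> maps the copies in \<open>A_{2l-1}\<close>
  through \<open>i\<close> but not \<open>i + 1\<close> injectively to copies through \<open>i + 1\<close> avoiding \<open>i\<close> and the edge
  \<open>{i+1, i+l}\<close>. The copies inside the clique \<open>{i+1..i+l}\<close> that use this edge are further
  copies through \<open>i + 1\<close>, one for each choice of their remaining \<open>n - 2\<close> vertices, so
  \<open>z_{i+1} - z_i \<ge> C(l-2, n-2)\<close>, which exceeds \<open>\<delta>_l\<close> by hypothesis.\<close>

section \<open>Copies as images of embeddings\<close>

definition gmap :: "('a \<Rightarrow> 'b) \<Rightarrow> 'a sgraph \<Rightarrow> 'b sgraph" where
  "gmap \<phi> F = (\<phi> ` verts F, (\<lambda>e. \<phi> ` e) ` edges F)"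

definition embedding :: "'a sgraph \<Rightarrow> 'b sgraph \<Rightarrow> ('a \<Rightarrow> 'b) \<Rightarrow> bool" where
  "embedding F G \<phi> \<longleftrightarrow> inj_on \<phi> (verts F) \<and> \<phi> ` verts F \<subseteq> verts G \<and>
     (\<forall>e\<in>edges F. \<phi> ` e \<in> edges G)"

definition copies :: "'a sgraph \<Rightarrow> 'b sgraph \<Rightarrow> 'b sgraph set" where
  "copies F G = {H. subgraph_of H G \<and> isomorphic F H}"

lemma Fdeg_copies: "Fdeg F G v = card {H \<in> copies F G. v \<in> verts H}"
  by (simp add: Fdeg_def copies_def)

lemma verts_gmap [simp]: "verts (gmap \<phi> F) = \<phi> ` verts F"
  by (simp add: gmap_def verts_def)

lemma edges_gmap [simp]: "edges (gmap \<phi> F) = (\<lambda>e. \<phi> ` e) ` edges F"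
  by (simp add: gmap_def edges_def)

lemma sgraph_eqI: "verts H = verts H' \<Longrightarrow> edges H = edges H' \<Longrightarrow> H = H'"
  by (simp add: verts_def edges_def prod_eq_iff)

lemma gmap_comp: "gmap \<sigma> (gmap \<phi> F) = gmap (\<sigma> \<circ> \<phi>) F"
  by (rule sgraph_eqI) (auto simp: image_comp)

lemma gmap_id: "gmap id H = H"
  by (rule sgraph_eqI) simp_all

lemma gmap_cong:
  assumes "simple_graph F" "\<And>x. x \<in> verts F \<Longrightarrow> \<phi> x = \<psi> x"
  shows "gmap \<phi> F = gmap \<psi> F"
proof (rule sgraph_eqI)
  have "e \<subseteq> verts F" if "e \<in> edges F" for e
    using assms(1) that by (simp add: simple_graph_def)
  then show "edges (gmap \<phi> F) = edges (gmap \<psi> F)"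
    using assms(2) by (auto intro!: image_cong)
qed (use assms(2) in auto)

lemma simple_graph_edgeE:
  assumes "simple_graph G" "e \<in> edges G"
  obtains x y where "e = {x, y}" "x \<noteq> y" "x \<in> verts G" "y \<in> verts G"
  using assms unfolding simple_graph_def by (metis card_2_iff insert_subset)

lemma edge_endpoints:
  assumes "simple_graph G" "{x, y} \<in> edges G"
  shows "x \<noteq> y" "x \<in> verts G" "y \<in> verts G"
proof -
  have "{x, y} \<subseteq> verts G" "card {x, y} = 2" using assms unfolding simple_graph_def by blast+
  then show "x \<noteq> y" "x \<in> verts G" "y \<in> verts G" by auto
qed

lemma embedding_edge:
  assumes "embedding F G \<phi>" "{x, y} \<in> edges F"
  shows "{\<phi> x, \<phi> y} \<in> edges G"
proof -
  have "\<phi> ` {x, y} \<in> edges G" using assms unfolding embedding_def by blast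
  then show ?thesis by simp
qed

lemma embedding_comp:
  assumes "embedding F G \<phi>" "embedding (gmap \<phi> F) K \<sigma>"
  shows "embedding F K (\<sigma> \<circ> \<phi>)"
  using assms unfolding embedding_def by (simp add: comp_inj_on image_comp)

lemma gmap_embedding_in_copies:
  assumes F: "simple_graph F" and \<phi>: "embedding F G \<phi>"
  shows "gmap \<phi> F \<in> copies F G"
proof -
  have inj: "inj_on \<phi> (verts F)" using \<phi> by (simp add: embedding_def)
  have sub: "e \<subseteq> verts F" if "e \<in> edges F" for e
    using F that by (simp add: simple_graph_def)
  have "subgraph_of (gmap \<phi> F) G"
    using \<phi> sub by (auto simp: subgraph_of_def embedding_def)
  moreover have "{x, y} \<in> edges F" if "x \<in> verts F" "y \<in> verts F" "\<phi> ` e = {\<phi> x, \<phi> y}"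
    "e \<in> edges F" for x y e
  proof -
    have "\<phi> ` e = \<phi> ` {x, y}" using that(3) by simp
    then have "e = {x, y}"
      using inj_on_image_eq_iff[OF inj sub[OF that(4)], of "{x, y}"] that(1,2) by simp
    then show ?thesis using that(4) by simp
  qed
  then have "isomorphic F (gmap \<phi> F)"
    unfolding isomorphic_def using inj
    by (intro exI[of _ \<phi>]) (auto simp: bij_betw_def intro: image_eqI[where x = "{_, _}"])
  ultimately show ?thesis by (simp add: copies_def)
qed

lemma copy_eq_gmap_embedding:
  assumes F: "simple_graph F" and G: "simple_graph G" and H: "H \<in> copies F G"
  obtains \<phi> where "embedding F G \<phi>" "H = gmap \<phi> F"
proof -
  have sub: "subgraph_of H G" and "isomorphic F H" using H by (auto simp: copies_def)
  then obtain \<phi> where bij: "bij_betw \<phi> (verts F) (verts H)"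
    and iff: "\<forall>x\<in>verts F. \<forall>y\<in>verts F. {x, y} \<in> edges F \<longleftrightarrow> {\<phi> x, \<phi> y} \<in> edges H"
    unfolding isomorphic_def by blast
  have edges_H: "e \<in> edges H \<longleftrightarrow> e \<in> (\<lambda>e. \<phi> ` e) ` edges F" for e
  proof
    assume e: "e \<in> edges H"
    then have "e \<in> edges G" "e \<subseteq> verts H" using sub by (auto simp: subgraph_of_def)
    then obtain a b where "e = {a, b}" "a \<in> verts H" "b \<in> verts H"
      using G by (auto elim: simple_graph_edgeE)
    then obtain x y where "x \<in> verts F" "y \<in> verts F" "e = {\<phi> x, \<phi> y}"
      using bij unfolding bij_betw_def by (metis imageE)
    then show "e \<in> (\<lambda>e. \<phi> ` e) ` edges F" using iff e by (auto intro: image_eqI[where x = "{x, y}"])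
  next
    assume "e \<in> (\<lambda>e. \<phi> ` e) ` edges F"
    then obtain x y where "{x, y} \<in> edges F" "x \<in> verts F" "y \<in> verts F" "e = {\<phi> x, \<phi> y}"
      using F by (auto elim: simple_graph_edgeE)
    then show "e \<in> edges H" using iff by simp
  qed
  have "H = gmap \<phi> F"
    using bij edges_H by (intro sgraph_eqI) (auto simp: bij_betw_def)
  moreover have "embedding F G \<phi>"
    using bij sub edges_H unfolding embedding_def subgraph_of_def bij_betw_def by auto
  ultimately show thesis using that by blast
qed

lemma gmap_copy_in_copies:
  assumes F: "simple_graph F" and G: "simple_graph G"
    and H: "H \<in> copies F G" and \<sigma>: "embedding H G \<sigma>"
  shows "gmap \<sigma> H \<in> copies F G"
proof -
  obtain \<phi> where \<phi>: "embedding F G \<phi>" and H_eq: "H = gmap \<phi> F"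
    using copy_eq_gmap_embedding[OF F G H] .
  have "embedding F G (\<sigma> \<circ> \<phi>)" using embedding_comp \<phi> \<sigma> H_eq by blast
  then show ?thesis using gmap_embedding_in_copies[OF F] by (simp add: H_eq gmap_comp)
qed

lemma finite_copies:
  assumes "simple_graph G"
  shows "finite {H \<in> copies F G. P H}"
proof -
  have "finite (verts G)" "edges G \<subseteq> Pow (verts G)"
    using assms by (auto simp: simple_graph_def)
  then have "finite (Pow (verts G) \<times> Pow (edges G))"
    by (meson finite_Pow_iff finite_SigmaI finite_subset)
  moreover have "{H \<in> copies F G. P H} \<subseteq> Pow (verts G) \<times> Pow (edges G)"
    by (auto simp: copies_def subgraph_of_def verts_def edges_def)
  ultimately show ?thesis by (rule finite_subset[rotated])
qed

lemma card_verts_copy: "H \<in> copies F G \<Longrightarrow> card (verts H) = card (verts F)"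
  unfolding copies_def isomorphic_def by (auto dest: bij_betw_same_card)

section \<open>Counting copies\<close>

text \<open>Copies with vertex set \<open>S\<close> are images of \<open>F\<close> under a fixed bijection onto \<open>S\<close>
  followed by a permutation of \<open>S\<close>.\<close>

lemma card_copies_with_verts_le:
  assumes F: "simple_graph F" and G: "simple_graph G"
    and S: "finite S" "card S = card (verts F)"
  shows "card {H \<in> copies F G. verts H = S} \<le> fact (card S)"
proof -
  have "finite (verts F)" using F by (simp add: simple_graph_def)
  then obtain g where g: "bij_betw g (verts F) S" using finite_same_card_bij S by metis
  have sub: "{H \<in> copies F G. verts H = S} \<subseteq> (\<lambda>\<pi>. gmap (\<pi> \<circ> g) F) ` {\<pi>. \<pi> permutes S}"
  proof
    fix H assume "H \<in> {H \<in> copies F G. verts H = S}"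
    then have H: "H \<in> copies F G" and verts_H: "verts H = S" by auto
    obtain \<phi> where \<phi>: "embedding F G \<phi>" and H_eq: "H = gmap \<phi> F"
      using copy_eq_gmap_embedding[OF F G H] .
    have "bij_betw \<phi> (verts F) S" using \<phi> verts_H H_eq by (simp add: embedding_def bij_betw_def)
    then have "bij_betw (\<phi> \<circ> inv_into (verts F) g) S S"
      by (rule bij_betw_trans[OF bij_betw_inv_into[OF g]])
    moreover define \<pi> where "\<pi> x = (if x \<in> S then (\<phi> \<circ> inv_into (verts F) g) x else x)" for x
    ultimately have "\<pi> permutes S"
      by (intro bij_imp_permutes) (auto simp: \<pi>_def cong: bij_betw_cong)
    moreover have "H = gmap (\<pi> \<circ> g) F"
      unfolding H_eq using g by (intro gmap_cong[OF F]) (auto simp: \<pi>_def bij_betw_def)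
    ultimately show "H \<in> (\<lambda>\<pi>. gmap (\<pi> \<circ> g) F) ` {\<pi>. \<pi> permutes S}" by blast
  qed
  have "card {H \<in> copies F G. verts H = S} \<le> card ((\<lambda>\<pi>. gmap (\<pi> \<circ> g) F) ` {\<pi>. \<pi> permutes S})"
    using sub S(1) by (intro card_mono) (simp_all add: finite_permutations)
  also have "\<dots> \<le> card {\<pi>. \<pi> permutes S}"
    using S(1) by (intro card_image_le) (simp add: finite_permutations)
  also have "\<dots> = fact (card S)"
    using S(1) by (rule card_permutations[OF refl])
  finally show ?thesis .
qed

lemma card_copies_between_le:
  assumes F: "simple_graph F" and G: "simple_graph G"
    and KU: "finite K" "finite U" "K \<inter> U = {}" "card K \<le> card (verts F)"
  shows "card {H \<in> copies F G. K \<subseteq> verts H \<and> verts H \<subseteq> K \<union> U}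
    \<le> fact (card (verts F)) * (card U choose (card (verts F) - card K))"
proof -
  let ?n = "card (verts F)"
  define TT where "TT = {T. T \<subseteq> U \<and> card T = ?n - card K}"
  have "finite (verts F)" using F by (simp add: simple_graph_def)
  have sub: "{H \<in> copies F G. K \<subseteq> verts H \<and> verts H \<subseteq> K \<union> U}
      \<subseteq> (\<Union>T\<in>TT. {H \<in> copies F G. verts H = K \<union> T})"
  proof
    fix H assume H: "H \<in> {H \<in> copies F G. K \<subseteq> verts H \<and> verts H \<subseteq> K \<union> U}"
    then have "card (verts H) = ?n" "finite (verts H)"
      using card_verts_copy[of H F G] KU(1,2) by (auto intro: finite_subset)
    then have "verts H - K \<in> TT"
      using H card_Diff_subset[OF finite_subset[OF _ \<open>finite (verts H)\<close>]] by (auto simp: TT_def)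
    moreover have "verts H = K \<union> (verts H - K)" using H by auto
    ultimately show "H \<in> (\<Union>T\<in>TT. {H \<in> copies F G. verts H = K \<union> T})" using H by auto
  qed
  have piece: "card {H \<in> copies F G. verts H = K \<union> T} \<le> fact ?n" if "T \<in> TT" for T
  proof -
    have T: "T \<subseteq> U" "card T = ?n - card K" using that by (auto simp: TT_def)
    have "finite T" using T(1) KU(2) by (rule finite_subset)
    moreover have "K \<inter> T = {}" using KU(3) T(1) by blast
    ultimately have "card (K \<union> T) = ?n" using KU(1,4) T(2) by (simp add: card_Un_disjoint)
    then show ?thesis using card_copies_with_verts_le[OF F G] KU(1) \<open>finite T\<close> by simp
  qed
  have "finite TT" using KU(2) by (simp add: TT_def)
  have "card {H \<in> copies F G. K \<subseteq> verts H \<and> verts H \<subseteq> K \<union> U}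
      \<le> card (\<Union>T\<in>TT. {H \<in> copies F G. verts H = K \<union> T})"
    using sub by (intro card_mono finite_UN_I \<open>finite TT\<close> finite_copies[OF G])
  also have "\<dots> \<le> (\<Sum>T\<in>TT. card {H \<in> copies F G. verts H = K \<union> T})"
    using \<open>finite TT\<close> by (rule card_UN_le)
  also have "\<dots> \<le> fact ?n * card TT"
    using sum_bounded_above[OF piece] by (simp add: mult.commute)
  finally show ?thesis using n_subsets[OF KU(2)] by (simp add: TT_def)
qed

definition clique :: "'a sgraph \<Rightarrow> 'a set \<Rightarrow> bool" where
  "clique G C \<longleftrightarrow> C \<subseteq> verts G \<and> (\<forall>x\<in>C. \<forall>y\<in>C. x \<noteq> y \<longrightarrow> {x, y} \<in> edges G)"

lemma embedding_into_clique:
  assumes F: "simple_graph F" and inj: "inj_on \<phi> (verts F)"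
    and C: "clique G C" "\<phi> ` verts F \<subseteq> C"
  shows "embedding F G \<phi>"
proof -
  have "\<phi> ` e \<in> edges G" if "e \<in> edges F" for e
  proof -
    obtain x y where "e = {x, y}" "x \<noteq> y" "x \<in> verts F" "y \<in> verts F"
      using F \<open>e \<in> edges F\<close> by (auto elim: simple_graph_edgeE)
    moreover from this have "\<phi> x \<noteq> \<phi> y" using inj by (meson inj_onD)
    ultimately show ?thesis using C unfolding clique_def image_subset_iff by auto
  qed
  then show ?thesis using inj C unfolding embedding_def clique_def by blast
qed

lemma obtain_bij_betw_extending:
  assumes "finite A" "finite B" "A' \<subseteq> A" "B' \<subseteq> B" "card A' = card B'" "card A = card B"
  obtains h where "bij_betw h A B" "h ` A' = B'"
proof -
  have fin: "finite A'" "finite B'" using assms(1-4) by (auto intro: finite_subset)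
  obtain h1 where h1: "bij_betw h1 A' B'" using finite_same_card_bij fin assms(5) by blast
  have "card (A - A') = card (B - B')" using assms fin by (simp add: card_Diff_subset)
  then obtain h2 where h2: "bij_betw h2 (A - A') (B - B')"
    using finite_same_card_bij assms(1,2) by blast
  have "bij_betw (\<lambda>x. if x \<in> A' then h1 x else h2 x) (A' \<union> (A - A')) (B' \<union> (B - B'))"
    by (rule bij_betw_disjoint_Un[OF h1 h2]) auto
  moreover have "A' \<union> (A - A') = A" "B' \<union> (B - B') = B" using assms(3,4) by auto
  moreover have "(\<lambda>x. if x \<in> A' then h1 x else h2 x) ` A' = B'"
    using h1 by (simp add: bij_betw_def)
  ultimately show thesis using that by simp
qed

lemma copy_in_clique_through_edge:
  assumes F: "simple_graph F" "{a, b} \<in> edges F" and C: "clique G C"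
    and S: "S \<subseteq> C" "finite S" "card S = card (verts F)"
    and pq: "p \<in> S" "q \<in> S" "p \<noteq> q"
  obtains H where "H \<in> copies F G" "verts H = S" "{p, q} \<in> edges H"
proof -
  have ab: "a \<noteq> b" "a \<in> verts F" "b \<in> verts F" using edge_endpoints[OF F] by auto
  have "finite (verts F)" using F(1) by (simp add: simple_graph_def)
  then obtain \<phi> where \<phi>: "bij_betw \<phi> (verts F) S" "\<phi> ` {a, b} = {p, q}"
    using obtain_bij_betw_extending[of "verts F" S "{a, b}" "{p, q}"] ab S pq by auto
  then have "embedding F G \<phi>"
    using S(1) by (intro embedding_into_clique[OF F(1) _ C]) (auto simp: bij_betw_def)
  then have "gmap \<phi> F \<in> copies F G" by (rule gmap_embedding_in_copies[OF F(1)])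
  moreover have "verts (gmap \<phi> F) = S" using \<phi>(1) by (simp add: bij_betw_def)
  moreover have "{p, q} \<in> edges (gmap \<phi> F)" using F(2) \<phi>(2) by (metis edges_gmap imageI)
  ultimately show thesis by (rule that)
qed

lemma card_copies_in_clique_through_edge_ge:
  assumes F: "simple_graph F" "{a, b} \<in> edges F" and G: "simple_graph G"
    and C: "clique G C" and pq: "p \<in> C" "q \<in> C" "p \<noteq> q"
  shows "card (C - {p, q}) choose (card (verts F) - 2)
    \<le> card {H \<in> copies F G. verts H \<subseteq> C \<and> {p, q} \<in> edges H}"
proof -
  let ?n = "card (verts F)"
  let ?copies = "{H \<in> copies F G. verts H \<subseteq> C \<and> {p, q} \<in> edges H}"
  have "finite C" using G C by (auto simp: simple_graph_def clique_def intro: finite_subset)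
  have "card {a, b} \<le> ?n"
    using F edge_endpoints[OF F] by (intro card_mono) (auto simp: simple_graph_def)
  then have n: "2 \<le> ?n" using edge_endpoints[OF F] by simp
  have "{T. T \<subseteq> C - {p, q} \<and> card T = ?n - 2} \<subseteq> (\<lambda>H. verts H - {p, q}) ` ?copies"
  proof
    fix T assume T: "T \<in> {T. T \<subseteq> C - {p, q} \<and> card T = ?n - 2}"
    then have "finite T" using \<open>finite C\<close> by (auto intro: finite_subset)
    moreover have "p \<notin> T" "q \<notin> T" using T by auto
    ultimately have "card (insert p (insert q T)) = ?n" using T pq n by simp
    moreover have "insert p (insert q T) \<subseteq> C" using T pq by auto
    ultimately obtain H
      where H: "H \<in> copies F G" "verts H = insert p (insert q T)" "{p, q} \<in> edges H"
      using copy_in_clique_through_edge[OF F C] pq \<open>finite T\<close> by blast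
    moreover have "verts H - {p, q} = T" using T H(2) by auto
    ultimately show "T \<in> (\<lambda>H. verts H - {p, q}) ` ?copies"
      using T pq by (intro image_eqI[where x = H]) auto
  qed
  then have "card {T. T \<subseteq> C - {p, q} \<and> card T = ?n - 2} \<le> card ((\<lambda>H. verts H - {p, q}) ` ?copies)"
    by (intro card_mono finite_imageI finite_copies[OF G])
  also have "\<dots> \<le> card ?copies" using finite_copies[OF G] by (rule card_image_le)
  finally have "card {T. T \<subseteq> C - {p, q} \<and> card T = ?n - 2} \<le> card ?copies" .
  then show ?thesis using n_subsets[of "C - {p, q}"] \<open>finite C\<close> by simp
qed

section \<open>Graphs of diameter two\<close>

definition neighbours :: "'a sgraph \<Rightarrow> 'a \<Rightarrow> 'a set" where
  "neighbours G v = {u \<in> verts G. {v, u} \<in> edges G}"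

lemma gdegree_eq_card_neighbours: "gdegree G v = card (neighbours G v)"
  by (simp add: gdegree_def neighbours_def)

lemma finite_neighbours: "finite (verts G) \<Longrightarrow> finite (neighbours G v)"
  by (simp add: neighbours_def)

lemma walk_of_len_le_2_cases:
  assumes "walk_of_len G u v k" "k \<le> 2"
  shows "u = v \<or> {u, v} \<in> edges G \<or> (\<exists>x\<in>verts G. {u, x} \<in> edges G \<and> {x, v} \<in> edges G)"
proof -
  obtain xs where xs: "is_walk G xs" "hd xs = u" "last xs = v" "length xs = Suc k"
    using assms(1) unfolding walk_of_len_def by blast
  consider "k = 0" | "k = 1" | "k = 2" using assms(2) by linarith
  then show ?thesis
  proof cases
    case 1
    then show ?thesis using xs by (auto simp: length_Suc_conv)
  next
    case 2
    then obtain a b where "xs = [a, b]" using xs(4) by (auto simp: length_Suc_conv)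
    then show ?thesis using xs unfolding is_walk_def by force
  next
    case 3
    then obtain a b c where "xs = [a, b, c]"
      using xs(4) by (auto simp: length_Suc_conv numeral_2_eq_2)
    moreover have "{xs ! 0, xs ! 1} \<in> edges G" "{xs ! 1, xs ! 2} \<in> edges G"
      using xs(1) 3 xs(4) unfolding is_walk_def by (auto simp: numeral_2_eq_2)
    ultimately show ?thesis using xs unfolding is_walk_def by auto
  qed
qed

lemma gdist_le: "walk_of_len G u v k \<Longrightarrow> gdist G u v \<le> k"
  unfolding gdist_def by (rule Least_le)

lemma finite_gdists:
  assumes "finite (verts G)"
  shows "finite {gdist G u v | u v. u \<in> verts G \<and> v \<in> verts G}"
proof -
  have "{gdist G u v | u v. u \<in> verts G \<and> v \<in> verts G}
      = (\<lambda>(u, v). gdist G u v) ` (verts G \<times> verts G)" by auto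
  then show ?thesis using assms by simp
qed

lemma gdist_le_diameter:
  assumes "finite (verts G)" "u \<in> verts G" "v \<in> verts G"
  shows "gdist G u v \<le> diameter G"
  unfolding diameter_def using assms by (intro Max_ge finite_gdists) auto

lemma diameter_le_2_close:
  assumes "connected_graph G" "finite (verts G)" "diameter G \<le> 2"
    and "u \<in> verts G" "v \<in> verts G"
  shows "u = v \<or> {u, v} \<in> edges G \<or> (\<exists>x\<in>verts G. {u, x} \<in> edges G \<and> {x, v} \<in> edges G)"
proof -
  have "\<exists>k. walk_of_len G u v k" using assms(1,4,5) by (simp add: connected_graph_def)
  then have "walk_of_len G u v (gdist G u v)" unfolding gdist_def by (rule LeastI_ex)
  moreover have "gdist G u v \<le> 2" using gdist_le_diameter assms(2-5) by (meson le_trans)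
  ultimately show ?thesis by (rule walk_of_len_le_2_cases)
qed

lemma diameter_2_nonadjacent_pair:
  assumes "connected_graph G" "finite (verts G)" "diameter G = 2"
  obtains u v where "u \<in> verts G" "v \<in> verts G" "u \<noteq> v" "{u, v} \<notin> edges G"
proof -
  let ?D = "{gdist G u v | u v. u \<in> verts G \<and> v \<in> verts G}"
  have "verts G \<noteq> {}" using assms(1) by (simp add: connected_graph_def)
  then have "Max ?D \<in> ?D" using assms(2)
    by (intro Max_in finite_gdists) auto
  then obtain u v where uv: "u \<in> verts G" "v \<in> verts G" "gdist G u v = 2"
    using assms(3) unfolding diameter_def by auto
  have "\<not> walk_of_len G u v k" if "k \<le> 1" for k
    using gdist_le[of G u v k] that uv(3) by linarith
  moreover have "walk_of_len G u u 0" using uv(1)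
    unfolding walk_of_len_def is_walk_def by (intro exI[of _ "[u]"]) auto
  moreover have "walk_of_len G u v 1" if "{u, v} \<in> edges G" using uv(1,2) that
    unfolding walk_of_len_def is_walk_def by (intro exI[of _ "[u, v]"]) (auto simp: less_Suc_eq)
  ultimately have "u \<noteq> v" "{u, v} \<notin> edges G" by auto
  with uv show thesis using that by blast
qed

lemma min_degree_le_gdegree:
  "finite (verts G) \<Longrightarrow> u \<in> verts G \<Longrightarrow> min_degree G \<le> gdegree G u"
  unfolding min_degree_def by (rule Min_le) auto

lemma min_degree_attained:
  assumes "finite (verts G)" "verts G \<noteq> {}"
  obtains w where "w \<in> verts G" "gdegree G w = min_degree G"
proof -
  have "min_degree G \<in> gdegree G ` verts G"
    unfolding min_degree_def using assms by (intro Min_in) auto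
  then show thesis using that by auto
qed

lemma diameter_2_neighbours_nonempty:
  assumes G: "simple_graph G" "connected_graph G" "diameter G = 2" and u: "u \<in> verts G"
  shows "neighbours G u \<noteq> {}"
proof -
  have fin: "finite (verts G)" using G(1) by (simp add: simple_graph_def)
  obtain v where v: "v \<in> verts G" "v \<noteq> u"
    using diameter_2_nonadjacent_pair[OF G(2) fin G(3)] by metis
  then have "{u, v} \<in> edges G \<or> (\<exists>x\<in>verts G. {u, x} \<in> edges G)"
    using diameter_le_2_close[OF G(2) fin _ u v(1)] G(3) by auto
  then show ?thesis using v(1) by (auto simp: neighbours_def)
qed

lemma diameter_2_edges_nonempty:
  assumes G: "simple_graph G" "connected_graph G" "diameter G = 2"
  shows "edges G \<noteq> {}"
proof -
  obtain u where "u \<in> verts G" using G(2) by (auto simp: connected_graph_def)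
  then show ?thesis using diameter_2_neighbours_nonempty[OF G] by (auto simp: neighbours_def)
qed

lemma diameter_2_min_degree_pos:
  assumes G: "simple_graph G" "connected_graph G" "diameter G = 2"
  shows "0 < min_degree G"
proof -
  have fin: "finite (verts G)" using G(1) by (simp add: simple_graph_def)
  moreover have "verts G \<noteq> {}" using G(2) by (simp add: connected_graph_def)
  ultimately obtain w where w: "w \<in> verts G" "gdegree G w = min_degree G"
    by (rule min_degree_attained)
  then show ?thesis
    using diameter_2_neighbours_nonempty[OF G w(1)] finite_neighbours[OF fin, of w]
    by (metis card_gt_0_iff gdegree_eq_card_neighbours)
qed

lemma diameter_2_min_degree_le:
  assumes G: "simple_graph G" "connected_graph G" "diameter G = 2"
  shows "min_degree G + 2 \<le> card (verts G)"
proof -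
  have fin: "finite (verts G)" using G(1) by (simp add: simple_graph_def)
  obtain u v where uv: "u \<in> verts G" "v \<in> verts G" "u \<noteq> v" "{u, v} \<notin> edges G"
    using diameter_2_nonadjacent_pair[OF G(2) fin G(3)] .
  have "{u, u} \<notin> edges G" using edge_endpoints(1)[OF G(1), of u u] by blast
  then have "neighbours G u \<subseteq> verts G - {u, v}" using uv(4) by (auto simp: neighbours_def)
  then have "card (neighbours G u) \<le> card (verts G - {u, v})" using fin by (intro card_mono) auto
  also have "\<dots> = card (verts G) - 2" using uv fin by (simp add: card_Diff_subset)
  finally have "card (neighbours G u) \<le> card (verts G) - 2" .
  moreover have "2 \<le> card (verts G)"
    using card_mono[OF fin, of "{u, v}"] uv by simp
  ultimately show ?thesis
    using min_degree_le_gdegree[OF fin uv(1)] by (simp add: gdegree_eq_card_neighbours)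
qed

section \<open>The graphs \<open>A_graph\<close> and \<open>F_graph\<close>\<close>

lemma verts_A_graph [simp]: "verts (A_graph l) = {1..2*l-1}"
  by (simp add: A_graph_def verts_def)

lemma A_graph_edge_iff:
  "{a, b} \<in> edges (A_graph l) \<longleftrightarrow>
     a \<in> {1..2*l-1} \<and> b \<in> {1..2*l-1} \<and> a \<noteq> b \<and> a - b \<le> l - 1 \<and> b - a \<le> l - 1"
  unfolding A_graph_def edges_def by (auto simp: doubleton_eq_iff)

lemma simple_A_graph: "simple_graph (A_graph l)"
  unfolding simple_graph_def by (auto simp: A_graph_def edges_def verts_def)

lemma clique_A_graph_window: "i < l \<Longrightarrow> clique (A_graph l) {Suc i..i+l}"
  unfolding clique_def A_graph_edge_iff by auto

lemma A_graph_edge_transpose: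
  assumes "{x, y} \<in> edges (A_graph l)" "x \<noteq> Suc i" "y \<noteq> Suc i" "1 \<le> i" "i < l"
  shows "{transpose i (Suc i) x, transpose i (Suc i) y} \<in> edges (A_graph l)"
  using assms unfolding A_graph_edge_iff transpose_def by auto

lemma apex_notin_A_graph: "2*l \<notin> verts (A_graph l)"
  by (cases l) auto

lemma verts_F_graph [simp]: "verts (F_graph l t) = insert (2*l) {1..2*l-1}"
  by (simp add: F_graph_def verts_def A_graph_def)

lemma edges_F_graph: "edges (F_graph l t) = edges (A_graph l) \<union> {{2*l, j} | j. j \<in> {1..t}}"
  by (simp add: F_graph_def edges_def)

lemma simple_F_graph: "t < l \<Longrightarrow> simple_graph (F_graph l t)"
  using simple_A_graph[of l] unfolding simple_graph_def by (auto simp: edges_F_graph)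

lemma F_graph_apex_edge_iff:
  assumes "t < l"
  shows "{2*l, y} \<in> edges (F_graph l t) \<longleftrightarrow> y \<in> {1..t}"
proof -
  have "{2*l, y} \<notin> edges (A_graph l)" unfolding A_graph_edge_iff by (cases l) auto
  then show ?thesis using assms by (auto simp: edges_F_graph doubleton_eq_iff)
qed

lemma F_graph_edge_off_apex:
  "x \<noteq> 2*l \<Longrightarrow> y \<noteq> 2*l \<Longrightarrow> {x, y} \<in> edges (F_graph l t) \<longleftrightarrow> {x, y} \<in> edges (A_graph l)"
  by (auto simp: edges_F_graph doubleton_eq_iff)

lemma subgraph_of_A_graph_iff:
  "subgraph_of H (A_graph l) \<longleftrightarrow> subgraph_of H (F_graph l t) \<and> 2*l \<notin> verts H"
proof
  assume H: "subgraph_of H (A_graph l)"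
  then have "2*l \<notin> verts H" using apex_notin_A_graph unfolding subgraph_of_def by blast
  with H show "subgraph_of H (F_graph l t) \<and> 2*l \<notin> verts H"
    by (auto simp: subgraph_of_def edges_F_graph)
next
  assume H: "subgraph_of H (F_graph l t) \<and> 2*l \<notin> verts H"
  have "e \<in> edges (A_graph l)" if "e \<in> edges H" for e
  proof -
    have "e \<in> edges (F_graph l t)" "e \<subseteq> verts H" using H that by (auto simp: subgraph_of_def)
    then show ?thesis using H unfolding edges_F_graph by blast
  qed
  with H show "subgraph_of H (A_graph l)" by (auto simp: subgraph_of_def)
qed

section \<open>Copies through the apex\<close>

lemma Fdeg_F_graph_eq:
  assumes "t < l"
  shows "Fdeg F (F_graph l t) v
    = Fdeg F (A_graph l) v + card {H \<in> copies F (F_graph l t). v \<in> verts H \<and> 2*l \<in> verts H}"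
proof -
  let ?X = "\<lambda>P. {H \<in> copies F (F_graph l t). v \<in> verts H \<and> P H}"
  have "{H \<in> copies F (A_graph l). v \<in> verts H} = ?X (\<lambda>H. 2*l \<notin> verts H)"
    unfolding copies_def subgraph_of_A_graph_iff[where t = t] by blast
  moreover have "{H \<in> copies F (F_graph l t). v \<in> verts H}
      = ?X (\<lambda>H. 2*l \<notin> verts H) \<union> ?X (\<lambda>H. 2*l \<in> verts H)" by auto
  moreover have "finite (?X P)" for P by (rule finite_copies[OF simple_F_graph[OF assms]])
  ultimately show ?thesis by (simp add: Fdeg_copies card_Un_disjoint disjoint_iff)
qed

lemma embedding_F_graph_at_apex:
  assumes F: "simple_graph F" and "t < l" and w: "w \<in> verts F"
    and \<phi>: "inj_on \<phi> (verts F)" "\<phi> w = 2*l" "\<phi> ` neighbours F w \<subseteq> {1..t}"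
      "\<phi> ` (verts F - {w}) \<subseteq> {1..l}"
  shows "embedding F (F_graph l t) \<phi>"
proof -
  have apex: "{\<phi> w, \<phi> u} \<in> edges (F_graph l t)" if "{w, u} \<in> edges F" for u
  proof -
    have "u \<in> neighbours F w" using edge_endpoints[OF F that] that by (simp add: neighbours_def)
    then show ?thesis using \<phi>(2,3) F_graph_apex_edge_iff[OF \<open>t < l\<close>] by auto
  qed
  have "{\<phi> x, \<phi> y} \<in> edges (F_graph l t)" if xy: "{x, y} \<in> edges F" for x y
  proof -
    have x: "x \<noteq> y" "x \<in> verts F" "y \<in> verts F" using edge_endpoints[OF F xy] by auto
    consider "x = w" | "y = w" | "x \<noteq> w" "y \<noteq> w" by blast
    then show ?thesis
    proof cases
      case 1
      then show ?thesis using apex xy by simp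
    next
      case 2
      then show ?thesis using apex[of x] xy by (simp add: insert_commute)
    next
      case 3
      then have "\<phi> x \<in> {Suc 0..0+l}" "\<phi> y \<in> {Suc 0..0+l}" "\<phi> x \<noteq> \<phi> y"
        using x \<phi>(1,4) by (auto simp: inj_on_def)
      then have "{\<phi> x, \<phi> y} \<in> edges (A_graph l)"
        using clique_A_graph_window[of 0 l] \<open>t < l\<close> by (simp add: clique_def)
      then show ?thesis by (simp add: edges_F_graph)
    qed
  qed
  moreover have "\<phi> ` verts F \<subseteq> verts (F_graph l t)" using \<phi>(2,4) w by auto
  ultimately show ?thesis
    using F \<phi>(1) unfolding embedding_def by (auto elim: simple_graph_edgeE)
qed

lemma copy_through_apex_exists:
  fixes F :: "'a sgraph"
  assumes F: "simple_graph F" "connected_graph F" "diameter F = 2" and "card (verts F) < l"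
  obtains H where "H \<in> copies F (F_graph l (min_degree F))" "l \<in> verts H" "2*l \<in> verts H"
proof -
  let ?t = "min_degree F" and ?n = "card (verts F)"
  \<comment> \<open>the \<open>n - t - 1\<close> vertices other than \<open>w\<close> and its neighbours fill the top of \<open>{1..l}\<close>\<close>
  define I where "I = {l + ?t + 2 - ?n..l}"
  have fin: "finite (verts F)" using F(1) by (simp add: simple_graph_def)
  have t: "?t + 2 \<le> ?n" by (rule diameter_2_min_degree_le[OF F])
  obtain w where w: "w \<in> verts F" "gdegree F w = ?t"
    using min_degree_attained fin F(2) by (metis connected_graph_def)
  have N: "neighbours F w \<subseteq> verts F - {w}" "card (neighbours F w) = ?t"
    using edge_endpoints(1)[OF F(1), of w w] w(2) by (auto simp: neighbours_def gdegree_def)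
  have "card (verts F - {w}) = card ({1..?t} \<union> I)"
    using t \<open>?n < l\<close> w(1) fin by (auto simp: I_def card_Un_disjoint)
  then obtain h where h: "bij_betw h (verts F - {w}) ({1..?t} \<union> I)" "h ` neighbours F w = {1..?t}"
    using obtain_bij_betw_extending[of "verts F - {w}" "{1..?t} \<union> I" "neighbours F w" "{1..?t}"]
      fin N by (auto simp: I_def)
  define \<phi> where "\<phi> = h(w := 2*l)"
  have \<phi>_verts: "\<phi> ` (verts F - {w}) = {1..?t} \<union> I" using h(1) by (simp add: \<phi>_def bij_betw_def)
  have "2*l \<notin> {1..?t} \<union> I" using t \<open>?n < l\<close> by (auto simp: I_def)
  moreover have "inj_on \<phi> (verts F - {w})"
    using bij_betw_imp_inj_on[OF h(1)] by (rule inj_on_cong[THEN iffD1, rotated]) (simp add: \<phi>_def)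
  ultimately have "inj_on \<phi> (insert w (verts F - {w}))"
    unfolding inj_on_insert using \<phi>_verts by (simp add: \<phi>_def)
  then have "inj_on \<phi> (verts F)" using w(1) by (simp add: insert_absorb)
  moreover have "\<phi> ` neighbours F w = {1..?t}" using h(2) N(1) by (auto simp: \<phi>_def)
  moreover have "\<phi> ` (verts F - {w}) \<subseteq> {1..l}" using \<phi>_verts t \<open>?n < l\<close> by (auto simp: I_def)
  ultimately have "embedding F (F_graph l ?t) \<phi>"
    using t \<open>?n < l\<close> by (intro embedding_F_graph_at_apex[OF F(1) _ w(1)]) (auto simp: \<phi>_def)
  then have "gmap \<phi> F \<in> copies F (F_graph l ?t)" by (rule gmap_embedding_in_copies[OF F(1)])
  moreover have "l \<in> \<phi> ` (verts F - {w})" "2*l = \<phi> w" using \<phi>_verts t by (auto simp: I_def \<phi>_def)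
  then have "l \<in> verts (gmap \<phi> F)" "2*l \<in> verts (gmap \<phi> F)" using w(1) by auto
  ultimately show thesis by (rule that)
qed

lemma embedding_apex_neighbours:
  assumes F: "simple_graph F" and "t < l" and \<phi>: "embedding F (F_graph l t) \<phi>"
    and w: "w \<in> verts F" "\<phi> w = 2*l" "t \<le> gdegree F w"
  shows "\<phi> ` neighbours F w = {1..t}"
proof (rule card_seteq)
  show "\<phi> ` neighbours F w \<subseteq> {1..t}"
  proof
    fix v assume "v \<in> \<phi> ` neighbours F w"
    then obtain u where "{w, u} \<in> edges F" "v = \<phi> u" by (auto simp: neighbours_def)
    then show "v \<in> {1..t}"
      using embedding_edge[OF \<phi>] w(2) F_graph_apex_edge_iff[OF \<open>t < l\<close>] by fastforce
  qed
  have "inj_on \<phi> (neighbours F w)"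
    using \<phi> by (auto simp: embedding_def neighbours_def intro: inj_on_subset)
  then show "card {1..t} \<le> card (\<phi> ` neighbours F w)"
    using w(3) by (simp add: card_image gdegree_eq_card_neighbours)
qed simp

lemma copy_through_apex_verts:
  assumes F: "simple_graph F" "connected_graph F" "diameter F = 2"
    and t: "t < l" "\<And>u. u \<in> verts F \<Longrightarrow> t \<le> gdegree F u"
    and H: "H \<in> copies F (F_graph l t)" "2*l \<in> verts H"
  shows "{1..t} \<subseteq> verts H" "verts H \<subseteq> insert (2*l) {1..t+l-1}"
proof -
  have fin: "finite (verts F)" using F(1) by (simp add: simple_graph_def)
  obtain \<phi> where \<phi>: "embedding F (F_graph l t) \<phi>" and H_eq: "H = gmap \<phi> F"
    using copy_eq_gmap_embedding[OF F(1) simple_F_graph[OF t(1)] H(1)] .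
  obtain w where w: "w \<in> verts F" "\<phi> w = 2*l" using H(2) H_eq by auto
  have N: "\<phi> ` neighbours F w = {1..t}"
    using embedding_apex_neighbours[OF F(1) t(1) \<phi> w t(2)[OF w(1)]] .
  then show "{1..t} \<subseteq> verts H" using H_eq by (auto simp: neighbours_def)
  have far: "\<phi> y \<in> {1..t+l-1}" if y: "y \<in> verts F" "y \<noteq> w" for y
  proof -
    have "\<phi> y \<noteq> 2*l" using \<phi> w y by (metis embedding_def inj_onD)
    from diameter_le_2_close[OF F(2) fin _ w(1) y(1)] F(3) y(2)
    consider "{w, y} \<in> edges F" | x where "x \<in> verts F" "{w, x} \<in> edges F" "{x, y} \<in> edges F"
      by auto
    then show ?thesis
    proof cases
      case 1
      then have "\<phi> y \<in> {1..t}" using N y(1) by (auto simp: neighbours_def)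
      then show ?thesis using t(1) by auto
    next
      case 2
      then have x: "\<phi> x \<in> {1..t}" using N by (auto simp: neighbours_def)
      then have "{\<phi> x, \<phi> y} \<in> edges (A_graph l)"
        using embedding_edge[OF \<phi> 2(3)] F_graph_edge_off_apex \<open>\<phi> y \<noteq> 2*l\<close> t(1) by auto
      then show ?thesis using x unfolding A_graph_edge_iff by auto
    qed
  qed
  show "verts H \<subseteq> insert (2*l) {1..t+l-1}"
  proof
    fix v assume "v \<in> verts H"
    then obtain y where "y \<in> verts F" "v = \<phi> y" using H_eq by auto
    then show "v \<in> insert (2*l) {1..t+l-1}" using far w(2) by (cases "y = w") auto
  qed
qed

lemma card_copies_through_apex_le:
  fixes F :: "'a sgraph"
  assumes F: "simple_graph F" "connected_graph F" "diameter F = 2" and "card (verts F) < l"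
  defines "t \<equiv> min_degree F" and "n \<equiv> card (verts F)"
  shows "card {H \<in> copies F (F_graph l t). l \<in> verts H \<and> 2*l \<in> verts H}
    \<le> fact n * ((l - 2) choose (n - t - 2))"
proof -
  define K where "K = insert l (insert (2*l) {1..t})"
  define U where "U = {t+1..t+l-1} - {l}"
  have fin: "finite (verts F)" using F(1) by (simp add: simple_graph_def)
  have t: "0 < t" "t + 2 \<le> n"
    using diameter_2_min_degree_pos[OF F] diameter_2_min_degree_le[OF F]
    by (simp_all add: t_def n_def)
  then have "t < l" using \<open>card (verts F) < l\<close> by (simp add: n_def)
  have G: "simple_graph (F_graph l t)" using \<open>t < l\<close> by (rule simple_F_graph)
  have K: "finite K" "card K = t + 2" and U: "finite U" "card U = l - 2" "K \<inter> U = {}"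
    using t \<open>t < l\<close> by (auto simp: K_def U_def)
  have "{H \<in> copies F (F_graph l t). l \<in> verts H \<and> 2*l \<in> verts H}
      \<subseteq> {H \<in> copies F (F_graph l t). K \<subseteq> verts H \<and> verts H \<subseteq> K \<union> U}"
    using copy_through_apex_verts[OF F \<open>t < l\<close> min_degree_le_gdegree[OF fin, folded t_def]]
    by (fastforce simp: K_def U_def)
  then have "card {H \<in> copies F (F_graph l t). l \<in> verts H \<and> 2*l \<in> verts H}
      \<le> card {H \<in> copies F (F_graph l t). K \<subseteq> verts H \<and> verts H \<subseteq> K \<union> U}"
    by (rule card_mono[OF finite_copies[OF G]])
  also have "\<dots> \<le> fact n * (card U choose (n - card K))"
    using card_copies_between_le[OF F(1) G K(1) U(1) U(3)] K(2) t by (simp add: n_def)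
  finally show ?thesis using K(2) U(2) by simp
qed

section \<open>Growth of the \<open>F\<close>-degree along \<open>A_graph\<close>\<close>

lemma A_graph_transpose_copy:
  fixes F :: "'a sgraph"
  assumes F: "simple_graph F" and i: "1 \<le> i" "i < l"
    and H: "H \<in> copies F (A_graph l)" "i \<in> verts H" "Suc i \<notin> verts H"
  defines "H' \<equiv> gmap (transpose i (Suc i)) H"
  shows "H' \<in> copies F (A_graph l)" "Suc i \<in> verts H'" "i \<notin> verts H'"
    "{Suc i, i + l} \<notin> edges H'"
proof -
  let ?\<sigma> = "transpose i (Suc i)"
  have sub: "subgraph_of H (A_graph l)" using H(1) by (simp add: copies_def)
  have "?\<sigma> ` e \<in> edges (A_graph l)" if e: "e \<in> edges H" for e
  proof -
    have "e \<in> edges (A_graph l)" "Suc i \<notin> e" using sub e H(3) by (auto simp: subgraph_of_def)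
    then obtain x y where "e = {x, y}" "{x, y} \<in> edges (A_graph l)" "x \<noteq> Suc i" "y \<noteq> Suc i"
      using simple_A_graph by (metis simple_graph_edgeE insertCI)
    then show ?thesis using A_graph_edge_transpose i by simp
  qed
  moreover have "?\<sigma> ` verts H \<subseteq> verts (A_graph l)"
  proof -
    have "?\<sigma> ` verts (A_graph l) = verts (A_graph l)" using i by (intro transpose_image_eq) auto
    then show ?thesis using sub by (auto simp: subgraph_of_def)
  qed
  ultimately have "embedding H (A_graph l) ?\<sigma>" by (simp add: embedding_def)
  then show "H' \<in> copies F (A_graph l)"
    unfolding H'_def by (rule gmap_copy_in_copies[OF F simple_A_graph H(1)])
  show "Suc i \<in> verts H'" using H(2) unfolding H'_def by force
  show "i \<notin> verts H'" using H(3) by (auto simp: H'_def transpose_def split: if_splits)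
  show "{Suc i, i + l} \<notin> edges H'"
  proof
    assume "{Suc i, i + l} \<in> edges H'"
    then obtain e where e: "e \<in> edges H" "?\<sigma> ` e = {Suc i, i + l}" by (auto simp: H'_def)
    have "e = ?\<sigma> ` ?\<sigma> ` e" by (simp add: image_image)
    also have "\<dots> = {i, i + l}" using e(2) i by simp
    finally have "e = {i, i + l}" .
    moreover have "e \<in> edges (A_graph l)" using sub e(1) by (auto simp: subgraph_of_def)
    ultimately show False by (auto simp: A_graph_edge_iff)
  qed
qed

lemma card_copies_in_A_graph_window_ge:
  assumes F: "simple_graph F" "{a, b} \<in> edges F" and l: "2 \<le> l" "i < l"
  shows "(l - 2) choose (card (verts F) - 2)
    \<le> card {H \<in> copies F (A_graph l). verts H \<subseteq> {Suc i..i+l} \<and> {Suc i, i + l} \<in> edges H}"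
proof -
  have pq: "Suc i \<in> {Suc i..i+l}" "i + l \<in> {Suc i..i+l}" "Suc i \<noteq> i + l" using l by auto
  have "card ({Suc i..i+l} - {Suc i, i + l}) = card {Suc i..i+l} - card {Suc i, i + l}"
    using pq by (intro card_Diff_subset) auto
  then have "card ({Suc i..i+l} - {Suc i, i + l}) = l - 2" using pq(3) by simp
  moreover note card_copies_in_clique_through_edge_ge[OF F simple_A_graph
      clique_A_graph_window[OF l(2)] pq]
  ultimately show ?thesis by simp
qed

lemma Fdeg_A_graph_Suc_ge:
  fixes F :: "'a sgraph"
  assumes F: "simple_graph F" "{a, b} \<in> edges F" and i: "1 \<le> i" "i < l"
  shows "Fdeg F (A_graph l) i + ((l - 2) choose (card (verts F) - 2)) \<le> Fdeg F (A_graph l) (Suc i)"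
proof -
  let ?\<sigma> = "transpose i (Suc i)" and ?e = "{Suc i, i + l}"
  define X where "X v = {H \<in> copies F (A_graph l). v \<in> verts H}" for v
  define P where "P = X i \<inter> X (Suc i)"
  define M where "M = X i - X (Suc i)"
  define New where "New = {H \<in> copies F (A_graph l). verts H \<subseteq> {Suc i..i+l} \<and> ?e \<in> edges H}"
  have fin: "finite (X v)" "finite New" for v
    unfolding X_def New_def by (rule finite_copies[OF simple_A_graph])+
  have P: "P \<subseteq> {H \<in> X (Suc i). i \<in> verts H}" by (auto simp: P_def X_def)
  have M: "gmap ?\<sigma> ` M \<subseteq> {H \<in> X (Suc i). i \<notin> verts H \<and> ?e \<notin> edges H}"
    using A_graph_transpose_copy[OF F(1) i] by (auto simp: M_def X_def)
  have New: "New \<subseteq> {H \<in> X (Suc i). i \<notin> verts H \<and> ?e \<in> edges H}"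
    by (auto simp: New_def X_def copies_def subgraph_of_def)
  have "inj_on (gmap ?\<sigma>) M"
    by (rule inj_on_inverseI[where g = "gmap ?\<sigma>"]) (simp add: gmap_comp gmap_id)
  then have "card (X i) = card P + card (gmap ?\<sigma> ` M)"
    using fin by (simp add: P_def M_def card_image card_Int_Diff)
  moreover have "(l - 2) choose (card (verts F) - 2) \<le> card New"
    unfolding New_def using i by (intro card_copies_in_A_graph_window_ge[OF F]) auto
  moreover have "card P + card (gmap ?\<sigma> ` M) + card New \<le> card (X (Suc i))"
  proof -
    have finite: "finite P" "finite (gmap ?\<sigma> ` M)"
      using P M by (blast intro: finite_subset[OF _ fin(1)])+
    have "P \<inter> gmap ?\<sigma> ` M = {}" "(P \<union> gmap ?\<sigma> ` M) \<inter> New = {}" using P M New by blast+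
    then have "card (P \<union> gmap ?\<sigma> ` M \<union> New) = card P + card (gmap ?\<sigma> ` M) + card New"
      using finite fin(2) by (simp add: card_Un_disjoint)
    then have "card P + card (gmap ?\<sigma> ` M) + card New = card (P \<union> gmap ?\<sigma> ` M \<union> New)" ..
    also have "\<dots> \<le> card (X (Suc i))" using P M New fin by (intro card_mono) auto
    finally show ?thesis .
  qed
  ultimately show ?thesis by (simp add: Fdeg_copies X_def)
qed

lemma Cb_of_nat_diff:
  assumes "c \<le> m" "d \<le> k" "k - d \<le> m - c"
  shows "Cb (int m - int c) (int k - int d) = (m - c) choose (k - d)"
  using assms by (simp add: Cb_def of_nat_diff[symmetric] del: of_nat_diff)

theorem lemma10:
  fixes F :: "'a sgraph" and l :: nat
  defines "n \<equiv> card (verts F)"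
  defines "t \<equiv> min_degree F"
  defines "z \<equiv> \<lambda>i. int (Fdeg F (A_graph l) i)"
  defines "f \<equiv> \<lambda>i. int (Fdeg F (F_graph l t) i)"
  defines "\<delta> \<equiv> \<lambda>i. f i - z i"
  assumes "simple_graph F"
    and "connected_graph F"
    and "diameter F = 2"
    and "l > n"
    and "Cb (int l - 2) (int n - 2) > fact n * Cb (int l - 2) (int n - int t - 2)"
  shows "\<forall>i \<in> {t+1..l-1}. 0 < \<delta> l \<and> \<delta> l < z (i+1) - z i"
proof -
  note F = assms(6-8)
  have "t + 2 \<le> n" using diameter_2_min_degree_le[OF F] by (simp add: t_def n_def)
  then have "t < l" using \<open>l > n\<close> by simp
  define Y where "Y = {H \<in> copies F (F_graph l t). l \<in> verts H \<and> 2*l \<in> verts H}"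
  have \<delta>_l: "\<delta> l = int (card Y)"
    using Fdeg_F_graph_eq[OF \<open>t < l\<close>, of F l] by (simp add: \<delta>_def f_def z_def Y_def)
  have "Y \<noteq> {}"
    using copy_through_apex_exists[OF F] \<open>l > n\<close> unfolding Y_def t_def n_def by blast
  then have pos: "0 < card Y"
    unfolding card_gt_0_iff Y_def by (intro conjI finite_copies[OF simple_F_graph[OF \<open>t < l\<close>]])
  have "card Y \<le> fact n * ((l - 2) choose (n - t - 2))"
    using card_copies_through_apex_le[OF F \<open>l > n\<close>[unfolded n_def], folded t_def n_def]
    unfolding Y_def .
  then have upper: "card Y < (l - 2) choose (n - 2)"
    using assms(10) Cb_of_nat_diff[of 2 l 2 n] Cb_of_nat_diff[of 2 l "t + 2" n] \<open>t + 2 \<le> n\<close> \<open>l > n\<close>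
    by (simp add: diff_diff_eq add.commute)
  obtain u v where uv: "{u, v} \<in> edges F"
    using diameter_2_edges_nonempty[OF F] simple_graph_edgeE[OF F(1)] by blast
  have step: "int ((l - 2) choose (n - 2)) \<le> z (i + 1) - z i" if "i \<in> {t+1..l-1}" for i
  proof -
    have "1 \<le> i" "i < l" using that \<open>t < l\<close> by auto
    from Fdeg_A_graph_Suc_ge[OF F(1) uv this] show ?thesis by (simp add: z_def n_def)
  qed
  show ?thesis using \<delta>_l pos upper step by fastforce
qed

end
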